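(* In the setting of the context, assume $G_{xy}^{[1]}=1$, $G_x/G_x^{[1]}\cong S_5$ and $G_x^{[1]}\cong S_4$. Then $G_x\cong S_5\times S_4$ and $G_e\cong S_4\wr C_2$.
   Context: $\mathcal{A}=(G_x,G_e,G_{xy})$ is a finite, primitive amalgam of degree $(5,2)$ (no nontrivial subgroup of $G_{xy}$ normal in both $G_x$ and $G_e$; $|G_x:G_{xy}|=5$, $|G_e:G_{xy}|=2$), $G=G_x*_{G_{xy}}G_e$ acts on the coset graph (5-valent tree) $\Gamma$, $x$ is the vertex with stabiliser $G_x$, $y$ the neighbour with $G_e$ the setwise stabiliser of $\{x,y\}$ and $G_x\cap G_y=G_{xy}$. $G_z^{[1]}$ is the pointwise stabiliser of $z$ and its neighbours, $G_{xy}^{[1]}=G_x^{[1]}\cap G_y^{[1]}$. *)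

theory Defs
  imports "HOL-Algebra.Algebra"
begin

text \<open>Kernel of the action of G on the right cosets of H (the neighbours of the vertex
  with stabiliser G in the coset graph): the pointwise stabiliser G^[1].\<close>
definition coset_action_kernel :: "('a, 'm) monoid_scheme \<Rightarrow> 'a set \<Rightarrow> 'a set" where
  "coset_action_kernel G H = {g \<in> carrier G. \<forall>C \<in> rcosets\<^bsub>G\<^esub> H. C #>\<^bsub>G\<^esub> g = C}"

text \<open>Wreath product H wr C_2 = (H x H) semidirect C_2, C_2 = bool under xor,
  the nontrivial element swapping the two coordinates.\<close>
definition wreath_C2 :: "('a, 'm) monoid_scheme \<Rightarrow> (('a \<times> 'a) \<times> bool) monoid" where
  "wreath_C2 H = \<lparr> carrier = {((a, b), s). a \<in> carrier H \<and> b \<in> carrier H},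
     monoid.mult = (\<lambda>x y. (if snd x
          then (fst (fst x) \<otimes>\<^bsub>H\<^esub> snd (fst y), snd (fst x) \<otimes>\<^bsub>H\<^esub> fst (fst y))
          else (fst (fst x) \<otimes>\<^bsub>H\<^esub> fst (fst y), snd (fst x) \<otimes>\<^bsub>H\<^esub> snd (fst y)),
        snd x \<noteq> snd y)),
     monoid.one = ((\<one>\<^bsub>H\<^esub>, \<one>\<^bsub>H\<^esub>), False) \<rparr>"

end

theory Submission
  imports Defs "HOL-Computational_Algebra.Primes"
begin

text \<open>
  Let \<open>K = G\<^sub>x\<^sup>[\<^sup>1\<^sup>]\<close>, the kernel of the action of \<open>G\<^sub>x\<close> on the five cosets of \<open>H = G\<^sub>x\<^sub>y\<close>; then
  \<open>|K| = 24\<close>, \<open>|G\<^sub>x| = 2880\<close> and \<open>|G\<^sub>x\<^sub>y| = 576 = |K|\<^sup>2\<close>.  Transport the copy \<open>L\<close> of \<open>K\<close> in \<open>G\<^sub>x\<^sub>y\<close>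
  into the edge stabiliser and call it \<open>A\<close>.  There the image \<open>E\<close> of \<open>G\<^sub>x\<^sub>y\<close> has index two, \<open>A\<close> is
  normalised by \<open>E\<close>, and \<open>G\<^sub>x\<^sub>y\<^sup>[\<^sup>1\<^sup>] = 1\<close> says exactly that \<open>A\<close> meets its conjugate \<open>B = A\<^sup>t\<close>
  trivially; counting gives \<open>E = A \<times> B\<close>.  Correcting \<open>t\<close> by an element of \<open>A\<close> yields an
  involution swapping \<open>A\<close> and \<open>B\<close>, so \<open>G\<^sub>e \<cong> A \<wr> C\<^sub>2 \<cong> S\<^sub>4 \<wr> C\<^sub>2\<close>.  Pulling \<open>E = A \<times> B\<close> back
  to \<open>G\<^sub>x\<close> shows \<open>H \<subseteq> K \<cdot> C\<^sub>G\<^sub>x(K)\<close>; this product is normal, \<open>H\<close> is maximal (prime index) but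
  not normal, so \<open>G\<^sub>x = K \<cdot> C\<^sub>G\<^sub>x(K)\<close>, and since \<open>Z(S\<^sub>4) = 1\<close> the product is direct:
  \<open>G\<^sub>x \<cong> G\<^sub>x/K \<times> K \<cong> S\<^sub>5 \<times> S\<^sub>4\<close>.
\<close>

lemma (in group) mult_inv_cancel_left [simp]:
  "x \<in> carrier G \<Longrightarrow> y \<in> carrier G \<Longrightarrow> x \<otimes> (inv x \<otimes> y) = y"
  by (simp add: m_assoc[symmetric])

lemma (in group) inv_mult_cancel_left [simp]:
  "x \<in> carrier G \<Longrightarrow> y \<in> carrier G \<Longrightarrow> inv x \<otimes> (x \<otimes> y) = y"
  by (simp add: m_assoc[symmetric])

section \<open>The kernel of the action on the cosets of a subgroup\<close>

lemma (in group) coset_action_kernel_normal: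
  assumes H: "subgroup H G"
  shows "coset_action_kernel G H \<lhd> G"
proof -
  let ?K = "coset_action_kernel G H"
  have Hs: "H \<subseteq> carrier G" using H subgroup.subset by blast
  have rc: "C \<subseteq> carrier G" if "C \<in> rcosets H" for C
    using that Hs r_coset_subset_G by (auto simp: RCOSETS_def)
  have rcg: "C #> g \<in> rcosets H" if "C \<in> rcosets H" "g \<in> carrier G" for C g
    using that Hs by (auto simp: RCOSETS_def coset_mult_assoc intro!: rcosetsI)
  have sub: "subgroup ?K G"
  proof
    show "?K \<subseteq> carrier G" by (auto simp: coset_action_kernel_def)
    show "\<one> \<in> ?K" using rc by (auto simp: coset_action_kernel_def)
  next
    fix x y assume "x \<in> ?K" "y \<in> ?K"
    then show "x \<otimes> y \<in> ?K"
      by (auto simp: coset_action_kernel_def coset_mult_assoc[symmetric] rc)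
  next
    fix x assume x: "x \<in> ?K"
    then have xc: "x \<in> carrier G" by (auto simp: coset_action_kernel_def)
    have "C #> inv x = C" if C: "C \<in> rcosets H" for C
    proof -
      have "C #> inv x = (C #> x) #> inv x" using x C by (auto simp: coset_action_kernel_def)
      also have "\<dots> = C" using xc C rc by (simp add: coset_mult_assoc)
      finally show ?thesis .
    qed
    then show "inv x \<in> ?K" using xc by (auto simp: coset_action_kernel_def)
  qed
  show ?thesis
  proof (rule normal_invI[OF sub])
    fix g k assume g: "g \<in> carrier G" and k: "k \<in> ?K"
    then have kc: "k \<in> carrier G" by (auto simp: coset_action_kernel_def)
    have "C #> (g \<otimes> k \<otimes> inv g) = C" if C: "C \<in> rcosets H" for C
    proof -
      have "C #> (g \<otimes> k \<otimes> inv g) = ((C #> g) #> k) #> inv g"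
        using C rc g kc by (simp add: coset_mult_assoc)
      also have "\<dots> = (C #> g) #> inv g" using k rcg[OF C g] by (auto simp: coset_action_kernel_def)
      also have "\<dots> = C" using C rc g by (simp add: coset_mult_assoc)
      finally show ?thesis .
    qed
    then show "g \<otimes> k \<otimes> inv g \<in> ?K" using g kc by (auto simp: coset_action_kernel_def)
  qed
qed

lemma (in group) coset_action_kernel_subset:
  assumes H: "subgroup H G"
  shows "coset_action_kernel G H \<subseteq> H"
proof
  fix k assume k: "k \<in> coset_action_kernel G H"
  have "H \<subseteq> carrier G" using H subgroup.subset by blast
  then have "H \<in> rcosets H" by (metis coset_mult_one one_closed rcosetsI)
  then have "H #> k = H" using k by (auto simp: coset_action_kernel_def)
  then show "k \<in> H" using k H coset_join1 by (auto simp: coset_action_kernel_def)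
qed

lemma (in group) normal_subset_coset_action_kernel:
  assumes H: "H \<lhd> G"
  shows "H \<subseteq> coset_action_kernel G H"
proof
  fix h assume h: "h \<in> H"
  have sg: "subgroup H G" using H normal_imp_subgroup by blast
  have Hs: "H \<subseteq> carrier G" using sg subgroup.subset by blast
  have hc: "h \<in> carrier G" using h Hs by blast
  have "C #> h = C" if "C \<in> rcosets H" for C
  proof -
    obtain g where g: "g \<in> carrier G" "C = H #> g" using \<open>C \<in> rcosets H\<close> by (auto simp: RCOSETS_def)
    have "C #> h = H #> (g \<otimes> h \<otimes> inv g) #> g"
      using g hc Hs by (simp add: coset_mult_assoc m_assoc)
    also have "H #> (g \<otimes> h \<otimes> inv g) = H"
      using coset_join2[OF _ sg normal_invE(2)[OF H g(1) h]] g hc by simp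
    finally show ?thesis using g by simp
  qed
  then show "h \<in> coset_action_kernel G H" using hc by (auto simp: coset_action_kernel_def)
qed

section \<open>Subgroups of index two and of prime index\<close>

lemma (in group) index_two_same_coset:
  assumes fin: "finite (carrier G)" and E: "subgroup E G" and idx: "card (rcosets E) = 2"
    and x: "x \<in> carrier G" "x \<notin> E" and y: "y \<in> carrier G" "y \<notin> E"
  shows "x \<otimes> inv y \<in> E"
proof -
  have Es: "E \<subseteq> carrier G" using E subgroup.subset by blast
  have "finite (rcosets E)" using finite_subset[OF rcosets_subset_PowG[OF E]] fin by blast
  moreover have "{E, E #> x, E #> y} \<subseteq> rcosets E"
    using Es x y rcosetsI[OF Es] rcosetsI[OF Es one_closed] by (simp add: coset_mult_one)
  ultimately have le: "card {E, E #> x, E #> y} \<le> 2" using idx card_mono by metis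
  have ne: "E #> x \<noteq> E" "E #> y \<noteq> E" using x y rcos_self E by blast+
  have "E #> x = E #> y"
  proof (rule ccontr)
    assume "E #> x \<noteq> E #> y"
    then have "card {E, E #> x, E #> y} = 3" using ne by simp
    then show False using le by simp
  qed
  then have "E #> (x \<otimes> inv y) = E" using coset_mult_inv2 x y Es by blast
  then show ?thesis using coset_join1 x y E by auto
qed

lemma (in group) index_two_normal:
  assumes fin: "finite (carrier G)" and E: "subgroup E G" and idx: "card (rcosets E) = 2"
  shows "E \<lhd> G" and "g \<in> carrier G \<Longrightarrow> g \<otimes> g \<in> E"
proof -
  note same = index_two_same_coset[OF fin E idx]
  show sq: "g \<otimes> g \<in> E" if g: "g \<in> carrier G" for g
  proof (cases "g \<in> E")
    case True then show ?thesis by (rule subgroup.m_closed[OF E True])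
  next
    case False
    have "inv g \<notin> E"
    proof
      assume "inv g \<in> E"
      then have "inv (inv g) \<in> E" by (rule subgroup.m_inv_closed[OF E])
      then show False using False g by simp
    qed
    then show ?thesis using same[OF g False, of "inv g"] g by simp
  qed
  show "E \<lhd> G"
  proof (rule normal_invI[OF E])
    fix g h assume g: "g \<in> carrier G" and h: "h \<in> E"
    have hc: "h \<in> carrier G" using subgroup.mem_carrier[OF E h] .
    show "g \<otimes> h \<otimes> inv g \<in> E"
    proof (rule ccontr)
      assume nE: "g \<otimes> h \<otimes> inv g \<notin> E"
      have gE: "g \<notin> E"
      proof
        assume "g \<in> E"
        then have "g \<otimes> h \<otimes> inv g \<in> E"
          by (intro subgroup.m_closed[OF E] subgroup.m_inv_closed[OF E] h)
        then show False using nE by contradiction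
      qed
      have "g \<otimes> h \<otimes> inv g \<otimes> inv g \<in> E" using same[OF _ nE g gE] g hc by simp
      then have "(g \<otimes> h \<otimes> inv g \<otimes> inv g) \<otimes> (g \<otimes> g) \<otimes> inv h \<in> E"
        using sq[OF g] subgroup.m_inv_closed[OF E h] by (meson E subgroup.m_closed)
      also have "(g \<otimes> h \<otimes> inv g \<otimes> inv g) \<otimes> (g \<otimes> g) \<otimes> inv h = g"
        using g hc by (simp add: m_assoc)
      finally show False using gE by simp
    qed
  qed
qed

lemma (in group) prime_index_maximal:
  assumes fin: "finite (carrier G)" and H: "subgroup H G" and M: "subgroup M G" and HM: "H \<subseteq> M"
    and p: "Factorial_Ring.prime (card (rcosets H))"
  shows "M = H \<or> M = carrier G"
proof -
  have Ms: "M \<subseteq> carrier G" using M subgroup.subset by blast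
  have Hpos: "card H > 0"
    using H fin subgroup.one_closed subgroup.subset by (metis card_gt_0_iff empty_iff finite_subset)
  have lM: "card (rcosets M) * card M = card (carrier G)" using lagrange[OF M] by (simp add: order_def)
  have lH: "card (rcosets H) * card H = card (carrier G)" using lagrange[OF H] by (simp add: order_def)
  have lHM: "card (rcosets\<^bsub>G\<lparr>carrier := M\<rparr>\<^esub> H) * card H = card M"
    using group.lagrange[OF subgroup_imp_group[OF M] subgroup_incl[OF H M HM]] by (simp add: order_def)
  have "(card (rcosets M) * card (rcosets\<^bsub>G\<lparr>carrier := M\<rparr>\<^esub> H)) * card H = card (rcosets H) * card H"
    by (simp only: mult.assoc lHM lM lH)
  then have "card (rcosets M) * card (rcosets\<^bsub>G\<lparr>carrier := M\<rparr>\<^esub> H) = card (rcosets H)"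
    using Hpos by simp
  then have "card (rcosets M) = 1 \<or> card (rcosets\<^bsub>G\<lparr>carrier := M\<rparr>\<^esub> H) = 1"
    using p prime_product by metis
  then show ?thesis
  proof
    assume "card (rcosets M) = 1"
    then have "card M = card (carrier G)" using lM by simp
    then show ?thesis using card_subset_eq[OF fin Ms] by simp
  next
    assume "card (rcosets\<^bsub>G\<lparr>carrier := M\<rparr>\<^esub> H) = 1"
    then have "card H = card M" using lHM by simp
    then show ?thesis using card_subset_eq[OF finite_subset[OF Ms fin] HM] by simp
  qed
qed

section \<open>Centralisers, centres and direct complements\<close>

definition centraliser :: "('a, 'm) monoid_scheme \<Rightarrow> 'a set \<Rightarrow> 'a set" where
  "centraliser G K = {g \<in> carrier G. \<forall>k \<in> K. g \<otimes>\<^bsub>G\<^esub> k = k \<otimes>\<^bsub>G\<^esub> g}"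

definition trivial_centre :: "('a, 'm) monoid_scheme \<Rightarrow> bool" where
  "trivial_centre G \<longleftrightarrow> centraliser G (carrier G) \<subseteq> {\<one>\<^bsub>G\<^esub>}"

text \<open>A permutation of at least three points commuting with every transposition is the
  identity: if \<open>p x = a \<noteq> x\<close>, conjugating by the transposition of \<open>a\<close> and a third point
  \<open>b\<close> would force \<open>p x = b\<close>.\<close>

lemma sym_group_trivial_centre:
  assumes n: "n \<ge> 3"
  shows "trivial_centre (sym_group n)"
proof -
  have "p = id" if p: "p permutes {1..n}" and comm: "\<And>q. q permutes {1..n} \<Longrightarrow> p \<circ> q = q \<circ> p"
    for p :: "nat \<Rightarrow> nat"
  proof
    fix x show "p x = id x"
    proof (rule ccontr)
      assume px: "p x \<noteq> id x"
      then have x: "x \<in> {1..n}" using p permutes_not_in by fastforce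
      have "\<not> {1..n} \<subseteq> {x, p x}"
      proof
        assume "{1..n} \<subseteq> {x, p x}"
        then have "card {1..n} \<le> card {x, p x}" by (rule card_mono[rotated]) simp
        then show False using n by (simp add: card_insert_if split: if_splits)
      qed
      then obtain b where b: "b \<in> {1..n}" "b \<noteq> x" "b \<noteq> p x" by blast
      have "(p \<circ> transpose (p x) b) x = (transpose (p x) b \<circ> p) x"
        using comm[OF permutes_swap_id[OF permutes_in_image[OF p, THEN iffD2, OF x] b(1)]] by simp
      then show False using px b by simp
    qed
  qed
  then show ?thesis
    by (auto simp: trivial_centre_def centraliser_def sym_group_carrier sym_group_mult sym_group_one)
qed

lemma iso_trivial_centre:
  assumes iso: "G \<cong> H" and G: "group G" and H: "group H" and Z: "trivial_centre H"
  shows "trivial_centre G"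
proof -
  obtain h where h: "h \<in> iso G H" using iso by (auto simp: is_iso_def)
  interpret group_hom G H h using G H h by (simp add: group_hom_def group_hom_axioms_def iso_def)
  have onto: "h ` carrier G = carrier H" and inj: "inj_on h (carrier G)"
    using h by (auto simp: iso_def bij_betw_def)
  have "z = \<one>\<^bsub>G\<^esub>" if z: "z \<in> centraliser G (carrier G)" for z
  proof -
    have zc: "z \<in> carrier G" using z by (simp add: centraliser_def)
    have comm: "h z \<otimes>\<^bsub>H\<^esub> h g = h g \<otimes>\<^bsub>H\<^esub> h z" if "g \<in> carrier G" for g
      using z that by (simp add: centraliser_def flip: hom_mult)
    have "h z \<in> centraliser H (carrier H)"
      unfolding centraliser_def
    proof (intro CollectI conjI ballI)
      show "h z \<in> carrier H" using zc by simp
      fix k assume "k \<in> carrier H"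
      then obtain g where "g \<in> carrier G" "k = h g" using onto by auto
      then show "h z \<otimes>\<^bsub>H\<^esub> k = k \<otimes>\<^bsub>H\<^esub> h z" using comm by simp
    qed
    then have "h z = h \<one>\<^bsub>G\<^esub>" using Z by (auto simp: trivial_centre_def)
    then show ?thesis using inj zc by (simp add: inj_on_def)
  qed
  then show ?thesis by (auto simp: trivial_centre_def)
qed

lemma (in group) centraliser_normal:
  assumes K: "K \<lhd> G"
  shows "centraliser G K \<lhd> G"
proof -
  let ?C = "centraliser G K"
  have Kc: "k \<in> carrier G" if "k \<in> K" for k
    using subgroup.mem_carrier[OF normal_imp_subgroup[OF K] that] .
  have Cc: "c \<in> carrier G" if "c \<in> ?C" for c
    using that by (simp add: centraliser_def)
  have comm: "c \<otimes> k = k \<otimes> c" if "c \<in> ?C" "k \<in> K" for c k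
    using that by (simp add: centraliser_def)
  have sub: "subgroup ?C G"
  proof
    show "?C \<subseteq> carrier G" by (auto simp: centraliser_def)
    show "\<one> \<in> ?C" using Kc by (simp add: centraliser_def)
  next
    fix x y assume x: "x \<in> ?C" and y: "y \<in> ?C"
    have "x \<otimes> y \<otimes> k = k \<otimes> (x \<otimes> y)" if k: "k \<in> K" for k
    proof -
      have "x \<otimes> y \<otimes> k = x \<otimes> (k \<otimes> y)" using Cc[OF x] Cc[OF y] Kc[OF k] comm[OF y k]
        by (simp add: m_assoc)
      also have "\<dots> = k \<otimes> (x \<otimes> y)" using Cc[OF x] Cc[OF y] Kc[OF k] comm[OF x k]
        by (simp add: m_assoc[symmetric])
      finally show ?thesis .
    qed
    then show "x \<otimes> y \<in> ?C" using Cc[OF x] Cc[OF y] Kc by (simp add: centraliser_def)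
  next
    fix x assume x: "x \<in> ?C"
    have "inv x \<otimes> k = k \<otimes> inv x" if k: "k \<in> K" for k
    proof -
      have "inv x \<otimes> (x \<otimes> k) \<otimes> inv x = inv x \<otimes> (k \<otimes> x) \<otimes> inv x" using comm[OF x k] by simp
      then show ?thesis using Cc[OF x] Kc[OF k] by (simp add: m_assoc)
    qed
    then show "inv x \<in> ?C" using Cc[OF x] Kc by (simp add: centraliser_def)
  qed
  show ?thesis
  proof (rule normal_invI[OF sub])
    fix g c assume g: "g \<in> carrier G" and c: "c \<in> ?C"
    have "g \<otimes> c \<otimes> inv g \<otimes> k = k \<otimes> (g \<otimes> c \<otimes> inv g)" if k: "k \<in> K" for k
    proof -
      have k': "inv g \<otimes> k \<otimes> g \<in> K" using normal_invE(2)[OF K, of "inv g" k] g k by simp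
      have cc: "c \<in> carrier G" using Cc[OF c] .
      have "g \<otimes> c \<otimes> inv g \<otimes> k = g \<otimes> (c \<otimes> (inv g \<otimes> k \<otimes> g)) \<otimes> inv g"
        using g cc Kc[OF k] by (simp add: m_assoc)
      also have "\<dots> = g \<otimes> ((inv g \<otimes> k \<otimes> g) \<otimes> c) \<otimes> inv g" using comm[OF c k'] by simp
      also have "\<dots> = k \<otimes> (g \<otimes> c \<otimes> inv g)" using g cc Kc[OF k] by (simp add: m_assoc)
      finally show ?thesis .
    qed
    moreover have "g \<otimes> c \<otimes> inv g \<in> carrier G" using g Cc[OF c] Kc by (metis inv_closed m_closed)
    ultimately show "g \<otimes> c \<otimes> inv g \<in> ?C" by (simp add: centraliser_def)
  qed
qed

lemma (in group) centraliser_inter_trivial: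
  assumes K: "subgroup K G" and Z: "trivial_centre (G\<lparr>carrier := K\<rparr>)"
  shows "K \<inter> centraliser G K = {\<one>}"
  using Z subgroup.one_closed[OF K] subgroup.mem_carrier[OF K]
  by (auto simp: trivial_centre_def centraliser_def)

text \<open>Internal direct products: if \<open>G\<close> is the product of normal subgroups \<open>K\<close> and \<open>C\<close> meeting
  trivially, then \<open>C\<close> maps isomorphically onto \<open>G/K\<close> and \<open>G \<cong> G/K \<times> K\<close>.\<close>

lemma (in group) direct_complement_iso:
  assumes K: "K \<lhd> G" and C: "C \<lhd> G" and KC: "K \<inter> C = {\<one>}" and prod: "K <#> C = carrier G"
  shows "G \<cong> (G Mod K) \<times>\<times> G\<lparr>carrier := K\<rparr>"
proof -
  have Csg: "subgroup C G" and Ksg: "subgroup K G"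
    using normal_imp_subgroup[OF C] normal_imp_subgroup[OF K] .
  interpret second_isomorphism_grp K G C
    using K Csg by (simp add: second_isomorphism_grp_def second_isomorphism_grp_axioms_def)
  have GKC: "G\<lparr>carrier := K <#> C\<rparr> = G" using prod by simp
  interpret q: group_hom "G\<lparr>carrier := C\<rparr>" "G Mod K" "\<lambda>g. K #> g"
    using normal_intersection_hom unfolding GKC .
  have "inj_on (\<lambda>g. K #> g) C"
    using q.inj_iff_trivial_ker normal_intersection_hom_kernel KC unfolding GKC by simp
  moreover have "(\<lambda>g. K #> g) ` C = carrier (G Mod K)"
    using normal_intersection_hom_surj unfolding GKC by simp
  ultimately have "(\<lambda>g. K #> g) \<in> iso (G\<lparr>carrier := C\<rparr>) (G Mod K)"
    using q.homh by (simp add: iso_def bij_betw_def)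
  then have CQ: "G\<lparr>carrier := C\<rparr> \<cong> G Mod K" unfolding is_iso_def by blast
  have gen: "subgroup_generated G S = G\<lparr>carrier := S\<rparr>" if S: "subgroup S G" for S
  proof -
    have "generate G (carrier G \<inter> S) = S"
      using subgroup.carrier_subgroup_generated_subgroup[OF S] by (simp add: subgroup_generated_def)
    then show ?thesis by (simp add: subgroup_generated_def)
  qed
  have "C \<inter> K \<subseteq> {\<one>}" and "C <#> K = carrier G"
    using KC prod commut_normal[OF Csg K] by auto
  then have "(\<lambda>(x, y). x \<otimes> y) \<in> iso (G\<lparr>carrier := C\<rparr> \<times>\<times> G\<lparr>carrier := K\<rparr>) G"
    using iso_group_mul_gen[OF C K] unfolding gen[OF Csg] gen[OF Ksg] by simp
  then have "G\<lparr>carrier := C\<rparr> \<times>\<times> G\<lparr>carrier := K\<rparr> \<cong> G" unfolding is_iso_def by blast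
  then have "G \<cong> G\<lparr>carrier := C\<rparr> \<times>\<times> G\<lparr>carrier := K\<rparr>"
    using group.iso_sym[OF DirProd_group[OF subgroup_imp_group[OF Csg] subgroup_imp_group[OF Ksg]]]
    by blast
  also have "\<dots> \<cong> (G Mod K) \<times>\<times> G\<lparr>carrier := K\<rparr>"
    using group.DirProd_iso_trans[OF subgroup_imp_group[OF Csg] CQ iso_refl] .
  finally show ?thesis .
qed

text \<open>A normal subgroup \<open>K\<close> with trivial centre splits off as a direct factor as soon as some
  non-normal subgroup of prime index lies in \<open>K\<close> times its centraliser: that product is a
  normal subgroup containing a maximal non-normal subgroup, hence everything.\<close>

lemma (in group) centraliser_complement_iso:
  assumes fin: "finite (carrier G)" and K: "K \<lhd> G" and Z: "trivial_centre (G\<lparr>carrier := K\<rparr>)"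
    and H: "subgroup H G" and p: "Factorial_Ring.prime (card (rcosets H))" and not_normal: "\<not> H \<lhd> G"
    and H_sub: "H \<subseteq> K <#> centraliser G K"
  shows "G \<cong> (G Mod K) \<times>\<times> G\<lparr>carrier := K\<rparr>"
proof -
  have C: "centraliser G K \<lhd> G" using centraliser_normal[OF K] .
  have KC: "K <#> centraliser G K \<lhd> G" using normal_subgroup_set_mult_closed[OF K C] .
  have "K <#> centraliser G K = H \<or> K <#> centraliser G K = carrier G"
    using prime_index_maximal[OF fin H normal_imp_subgroup[OF KC] H_sub p] .
  then have "K <#> centraliser G K = carrier G" using KC not_normal by auto
  then show ?thesis
    using direct_complement_iso[OF K C centraliser_inter_trivial[OF normal_imp_subgroup[OF K] Z]] by simp
qed

section \<open>Wreath products with the cyclic group of order two\<close>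

lemma wreath_C2_group:
  assumes "group H"
  shows "group (wreath_C2 H)"
proof -
  interpret H: group H by (rule assms)
  show ?thesis
  proof (rule groupI)
    fix x assume "x \<in> carrier (wreath_C2 H)"
    then obtain a b s where x: "x = ((a, b), s)" "a \<in> carrier H" "b \<in> carrier H"
      by (auto simp: wreath_C2_def)
    let ?y = "(if s then (inv\<^bsub>H\<^esub> b, inv\<^bsub>H\<^esub> a) else (inv\<^bsub>H\<^esub> a, inv\<^bsub>H\<^esub> b), s)"
    have "?y \<in> carrier (wreath_C2 H) \<and> ?y \<otimes>\<^bsub>wreath_C2 H\<^esub> x = \<one>\<^bsub>wreath_C2 H\<^esub>"
      using x by (auto simp: wreath_C2_def)
    then show "\<exists>y \<in> carrier (wreath_C2 H). y \<otimes>\<^bsub>wreath_C2 H\<^esub> x = \<one>\<^bsub>wreath_C2 H\<^esub>" by blast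
  qed (auto simp: wreath_C2_def H.m_assoc)
qed

lemma (in group) wreath_C2_hom:
  assumes H: "group H" and f: "f \<in> hom H G" and s: "s \<in> carrier G" "s \<otimes> s = \<one>"
    and comm: "\<And>p q. p \<in> carrier H \<Longrightarrow> q \<in> carrier H \<Longrightarrow>
                 (s \<otimes> f q \<otimes> s) \<otimes> f p = f p \<otimes> (s \<otimes> f q \<otimes> s)"
  shows "(\<lambda>((p, q), e). f p \<otimes> (s \<otimes> f q \<otimes> s) \<otimes> (if e then s else \<one>)) \<in> hom (wreath_C2 H) G"
proof -
  interpret H: group H by (rule H)
  define g where "g q = s \<otimes> f q \<otimes> s" for q
  have fc: "p \<in> carrier H \<Longrightarrow> f p \<in> carrier G" for p using f by (simp add: hom_def Pi_def)
  have fm: "p \<in> carrier H \<Longrightarrow> c \<in> carrier H \<Longrightarrow> f (p \<otimes>\<^bsub>H\<^esub> c) = f p \<otimes> f c" for p c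
    using f by (simp add: hom_mult)
  have ss: "z \<in> carrier G \<Longrightarrow> s \<otimes> (s \<otimes> z) = z" for z using s by (simp add: m_assoc[symmetric])
  have gc: "q \<in> carrier H \<Longrightarrow> g q \<in> carrier G" for q using s fc by (simp add: g_def)
  have gm: "p \<in> carrier H \<Longrightarrow> c \<in> carrier H \<Longrightarrow> g (p \<otimes>\<^bsub>H\<^esub> c) = g p \<otimes> g c" for p c
    using s fc fm by (simp add: g_def m_assoc ss)
  have sf: "p \<in> carrier H \<Longrightarrow> z \<in> carrier G \<Longrightarrow> s \<otimes> (f p \<otimes> z) = g p \<otimes> (s \<otimes> z)" for p z
    using s fc ss by (simp add: g_def m_assoc)
  have sg: "p \<in> carrier H \<Longrightarrow> z \<in> carrier G \<Longrightarrow> s \<otimes> (g p \<otimes> z) = f p \<otimes> (s \<otimes> z)" for p z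
    using s fc ss by (simp add: g_def m_assoc)
  have sf': "p \<in> carrier H \<Longrightarrow> s \<otimes> f p = g p \<otimes> s" for p
    using sf[of p \<one>] s fc gc by simp
  have sg': "p \<in> carrier H \<Longrightarrow> s \<otimes> g p = f p \<otimes> s" for p
    using sg[of p \<one>] s fc gc by simp
  have cm: "p \<in> carrier H \<Longrightarrow> q \<in> carrier H \<Longrightarrow> g q \<otimes> f p = f p \<otimes> g q" for p q
    using comm by (simp add: g_def)
  have cml: "p \<in> carrier H \<Longrightarrow> q \<in> carrier H \<Longrightarrow> z \<in> carrier G \<Longrightarrow>
      g q \<otimes> (f p \<otimes> z) = f p \<otimes> (g q \<otimes> z)" for p q z
    using cm fc gc by (metis m_assoc)
  define Psi where "Psi = (\<lambda>((p, q), e). f p \<otimes> g q \<otimes> (if e then s else \<one>))"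
  have "Psi \<in> hom (wreath_C2 H) G"
  proof (rule homI)
    fix x assume "x \<in> carrier (wreath_C2 H)"
    then show "Psi x \<in> carrier G"
      using fc gc s by (auto simp: wreath_C2_def Psi_def)
  next
    fix x y assume "x \<in> carrier (wreath_C2 H)" "y \<in> carrier (wreath_C2 H)"
    then obtain p q e1 c d e2 where xy: "x = ((p, q), e1)" "y = ((c, d), e2)"
      and pq: "p \<in> carrier H" "q \<in> carrier H" "c \<in> carrier H" "d \<in> carrier H"
      by (auto simp: wreath_C2_def)
    show "Psi (x \<otimes>\<^bsub>wreath_C2 H\<^esub> y) = Psi x \<otimes> Psi y"
      using pq s fc gc unfolding xy
      by (cases e1; cases e2) (simp_all add: wreath_C2_def Psi_def fm gm m_assoc sf sg cml ss cm sf' sg')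
  qed
  then show ?thesis unfolding Psi_def g_def .
qed

lemma (in group) wreath_C2_recognition:
  assumes fin: "finite (carrier G)" and E: "subgroup E G"
    and A: "subgroup A G" "A \<subseteq> E" and B: "subgroup B G" "B \<subseteq> E" and AB: "A \<inter> B = {\<one>}"
    and comm: "\<And>a b. a \<in> A \<Longrightarrow> b \<in> B \<Longrightarrow> b \<otimes> a = a \<otimes> b"
    and s: "s \<in> carrier G" "s \<otimes> s = \<one>" "s \<notin> E" and swap: "\<And>a. a \<in> A \<Longrightarrow> s \<otimes> a \<otimes> s \<in> B"
    and card: "card (carrier G) = 2 * (card A * card A)"
    and H: "group H" "H \<cong> G\<lparr>carrier := A\<rparr>"
  shows "G \<cong> wreath_C2 H"
proof -
  obtain f where f: "f \<in> iso H (G\<lparr>carrier := A\<rparr>)" using H(2) by (auto simp: is_iso_def)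
  have fhom: "f \<in> hom H G" using f subgroup.subset[OF A(1)] by (auto simp: iso_def hom_def)
  have finj: "inj_on f (carrier H)" and fim: "f ` carrier H = A"
    using f by (auto simp: iso_def bij_betw_def)
  have fA: "p \<in> carrier H \<Longrightarrow> f p \<in> A" for p using fim by blast
  note Ac = subgroup.mem_carrier[OF A(1)]
  define Psi where "Psi = (\<lambda>((p, q), e). f p \<otimes> (s \<otimes> f q \<otimes> s) \<otimes> (if e then s else \<one>))"
  have "(s \<otimes> f q \<otimes> s) \<otimes> f p = f p \<otimes> (s \<otimes> f q \<otimes> s)" if "p \<in> carrier H" "q \<in> carrier H" for p q
    using comm[OF fA[OF that(1)] swap[OF fA[OF that(2)]]] .
  then have hom: "Psi \<in> hom (wreath_C2 H) G"
    unfolding Psi_def by (rule wreath_C2_hom[OF H(1) fhom s(1,2)])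
  have W: "carrier (wreath_C2 H) = (carrier H \<times> carrier H) \<times> UNIV"
    by (auto simp: wreath_C2_def)
  interpret AB: group_disjoint_sum G A B
    using A(1) B(1) by (simp add: group_disjoint_sum_def is_group)
  have unique: "x = x' \<and> y = y'"
    if "x \<in> A" "y \<in> B" "x' \<in> A" "y' \<in> B" "x \<otimes> y = x' \<otimes> y'" for x y x' y'
    using AB.cancel AB that by blast
  have inj: "inj_on Psi (carrier (wreath_C2 H))"
  proof (rule inj_onI)
    fix x y assume "x \<in> carrier (wreath_C2 H)" "y \<in> carrier (wreath_C2 H)" and eq: "Psi x = Psi y"
    then obtain p q e1 c d e2 where xy: "x = ((p, q), e1)" "y = ((c, d), e2)"
      and pq: "p \<in> carrier H" "q \<in> carrier H" "c \<in> carrier H" "d \<in> carrier H"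
      by (auto simp: W)
    define u where "u = f p \<otimes> (s \<otimes> f q \<otimes> s)"
    define v where "v = f c \<otimes> (s \<otimes> f d \<otimes> s)"
    have AB_E: "a \<otimes> b \<in> E" if "a \<in> A" "b \<in> B" for a b
      using that A(2) B(2) subgroup.m_closed[OF E] by blast
    have uE: "u \<in> E" and vE: "v \<in> E"
      unfolding u_def v_def using AB_E fA swap pq by simp_all
    have uc: "u \<in> carrier G" and vc: "v \<in> carrier G"
      using uE vE subgroup.mem_carrier[OF E] by blast+
    have eq': "u \<otimes> (if e1 then s else \<one>) = v \<otimes> (if e2 then s else \<one>)"
      using eq by (simp add: xy Psi_def u_def v_def)
    have "s \<in> E" if "e1 \<noteq> e2"
    proof -
      have "s = inv u \<otimes> v \<or> s = inv v \<otimes> u"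
        using that eq' uc vc s(1) by (cases e1) (auto simp: m_assoc[symmetric] inv_solve_left')
      then show ?thesis
        using uE vE subgroup.m_closed[OF E] subgroup.m_inv_closed[OF E] by auto
    qed
    then have e: "e1 = e2" using s(3) by blast
    then have "u = v" using eq' s(1) uc vc by (cases e1) simp_all
    then have "f p = f c \<and> s \<otimes> f q \<otimes> s = s \<otimes> f d \<otimes> s"
      using unique[OF fA[OF pq(1)] swap[OF fA[OF pq(2)]] fA[OF pq(3)] swap[OF fA[OF pq(4)]]]
      by (simp add: u_def v_def)
    then have "f p = f c \<and> f q = f d" using s Ac fA pq by (simp add: m_assoc)
    then show "x = y" using finj pq e by (simp add: xy inj_on_def)
  qed
  have "card (carrier (wreath_C2 H)) = card (carrier G)"
    using card card_image[OF finj] fim by (simp add: W card_cartesian_product)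
  then have "Psi ` carrier (wreath_C2 H) = carrier G"
    using card_subset_eq[OF fin] hom_in_carrier[OF hom] card_image[OF inj] by (metis image_subsetI)
  then have "Psi \<in> iso (wreath_C2 H) G" using hom inj by (simp add: iso_def bij_betw_def)
  then show ?thesis using group.iso_sym[OF wreath_C2_group[OF H(1)]] by (auto simp: is_iso_def)
qed

section \<open>A subgroup of index two that is a direct square\<close>

lemma (in group) conjugation_hom:
  assumes "g \<in> carrier G"
  shows "(\<lambda>x. inv g \<otimes> x \<otimes> g) \<in> hom G G"
  using assms by (intro homI) (simp_all add: m_assoc)

text \<open>Two subgroups normalising each other and meeting trivially commute elementwise, since
  every commutator \<open>a b a\<^sup>-\<^sup>1 b\<^sup>-\<^sup>1\<close> lies in both of them.\<close>

lemma (in group) mutually_normalising_commute: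
  assumes A: "subgroup A G" and B: "subgroup B G" and AB: "A \<inter> B = {\<one>}"
    and nA: "\<And>b a. b \<in> B \<Longrightarrow> a \<in> A \<Longrightarrow> b \<otimes> a \<otimes> inv b \<in> A"
    and nB: "\<And>a b. a \<in> A \<Longrightarrow> b \<in> B \<Longrightarrow> a \<otimes> b \<otimes> inv a \<in> B"
    and a: "a \<in> A" and b: "b \<in> B"
  shows "b \<otimes> a = a \<otimes> b"
proof -
  have ac: "a \<in> carrier G" and bc: "b \<in> carrier G"
    using subgroup.mem_carrier[OF A a] subgroup.mem_carrier[OF B b] .
  define c where "c = a \<otimes> b \<otimes> inv a \<otimes> inv b"
  have "c = a \<otimes> (b \<otimes> inv a \<otimes> inv b)" using ac bc by (simp add: c_def m_assoc)
  moreover have "b \<otimes> inv a \<otimes> inv b \<in> A" using nA[OF b subgroup.m_inv_closed[OF A a]] .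
  ultimately have "c \<in> A" using subgroup.m_closed[OF A a] by simp
  moreover have "c \<in> B"
    using subgroup.m_closed[OF B nB[OF a b] subgroup.m_inv_closed[OF B b]] by (simp add: c_def)
  ultimately have "c = \<one>" using AB by blast
  then have "a \<otimes> b \<otimes> inv a \<otimes> inv b \<otimes> (b \<otimes> a) = b \<otimes> a" using ac bc by (simp add: c_def)
  then show ?thesis using ac bc by (simp add: m_assoc)
qed

lemma (in group) card_set_mult_disjoint:
  assumes A: "subgroup A G" and B: "subgroup B G" and AB: "A \<inter> B = {\<one>}"
  shows "card (A <#> B) = card A * card B"
proof -
  interpret AB: group_disjoint_sum G A B
    using A B by (simp add: group_disjoint_sum_def is_group)
  have "inj_on (\<lambda>(a, b). a \<otimes> b) (A \<times> B)"
    using AB.cancel AB by (auto simp: inj_on_def)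
  moreover have "A <#> B = (\<lambda>(a, b). a \<otimes> b) ` (A \<times> B)"
    by (auto simp: set_mult_def)
  ultimately show ?thesis by (simp add: card_image card_cartesian_product)
qed

locale index_two_square = group G for G (structure) +
  fixes E A t
  assumes fin: "finite (carrier G)"
    and E: "subgroup E G" and index_E: "card (rcosets E) = 2"
    and t: "t \<in> carrier G" "t \<notin> E"
    and A: "subgroup A G" "A \<subseteq> E"
    and A_normal: "\<And>e a. e \<in> E \<Longrightarrow> a \<in> A \<Longrightarrow> e \<otimes> a \<otimes> inv e \<in> A"
    and A_disjoint: "A \<inter> (\<lambda>a. inv t \<otimes> a \<otimes> t) ` A = {\<one>}"
    and card_E: "card E = card A * card A"
begin

definition B :: "'a set" where "B = (\<lambda>a. inv t \<otimes> a \<otimes> t) ` A"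

lemma Ec: "e \<in> E \<Longrightarrow> e \<in> carrier G"
  using subgroup.mem_carrier[OF E] .

lemma Ac: "a \<in> A \<Longrightarrow> a \<in> carrier G"
  using subgroup.mem_carrier[OF A(1)] .

lemma E_normal: "E \<lhd> G" and square_in_E: "g \<in> carrier G \<Longrightarrow> g \<otimes> g \<in> E"
  using index_two_normal[OF fin E index_E] by auto

lemma B_subgroup: "subgroup B G"
  unfolding B_def
  by (rule group_hom.subgroup_img_is_subgroup[OF group_hom.intro[OF is_group is_group] A(1)])
    (rule group_hom_axioms.intro[OF conjugation_hom[OF t(1)]])

lemma B_sub_E: "B \<subseteq> E"
  using normal_invE(2)[OF E_normal, of "inv t"] t(1) A(2) by (auto simp: B_def)

lemma B_normal: "e \<in> E \<Longrightarrow> b \<in> B \<Longrightarrow> e \<otimes> b \<otimes> inv e \<in> B"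
proof -
  assume e: "e \<in> E" and "b \<in> B"
  then obtain a where a: "a \<in> A" "b = inv t \<otimes> a \<otimes> t" by (auto simp: B_def)
  have e': "t \<otimes> e \<otimes> inv t \<in> E" using normal_invE(2)[OF E_normal t(1) e] .
  have "e \<otimes> b \<otimes> inv e = inv t \<otimes> ((t \<otimes> e \<otimes> inv t) \<otimes> a \<otimes> inv (t \<otimes> e \<otimes> inv t)) \<otimes> t"
    using a t Ac Ec[OF e] by (simp add: inv_mult_group m_assoc)
  then show ?thesis using A_normal[OF e' a(1)] by (auto simp: B_def)
qed

lemma A_B_commute: "a \<in> A \<Longrightarrow> b \<in> B \<Longrightarrow> b \<otimes> a = a \<otimes> b"
  using mutually_normalising_commute[OF A(1) B_subgroup A_disjoint[folded B_def]]
    A_normal B_normal B_sub_E A(2) by blast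

lemma E_product: "A <#> B = E"
proof -
  have "inj_on (\<lambda>a. inv t \<otimes> a \<otimes> t) A" using t Ac by (auto simp: inj_on_def)
  then have "card (A <#> B) = card E"
    using card_set_mult_disjoint[OF A(1) B_subgroup A_disjoint[folded B_def]] card_E
    by (simp add: B_def card_image)
  moreover have "A <#> B \<subseteq> E"
    using A(2) B_sub_E subgroup.m_closed[OF E] by (auto simp: set_mult_def)
  moreover have "finite E" using fin finite_subset subgroup.subset[OF E] by blast
  ultimately show ?thesis using card_subset_eq by blast
qed

lemma unique_decomposition:
  "x \<in> A \<Longrightarrow> y \<in> B \<Longrightarrow> x' \<in> A \<Longrightarrow> y' \<in> B \<Longrightarrow> x \<otimes> y = x' \<otimes> y' \<Longrightarrow> x = x' \<and> y = y'"
proof -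
  interpret AB: group_disjoint_sum G A B
    using A(1) B_subgroup by (simp add: group_disjoint_sum_def is_group)
  show "x \<in> A \<Longrightarrow> y \<in> B \<Longrightarrow> x' \<in> A \<Longrightarrow> y' \<in> B \<Longrightarrow> x \<otimes> y = x' \<otimes> y' \<Longrightarrow> x = x' \<and> y = y'"
    using AB.cancel A_disjoint[folded B_def] by blast
qed

text \<open>Conjugation by \<open>t\<close> swaps \<open>A\<close> and \<open>B\<close>, because \<open>t\<^sup>2 \<in> E\<close> normalises \<open>A\<close>.\<close>

lemma B_conj_A: "b \<in> B \<Longrightarrow> inv t \<otimes> b \<otimes> t \<in> A"
proof -
  assume "b \<in> B"
  then obtain a where a: "a \<in> A" "b = inv t \<otimes> a \<otimes> t" by (auto simp: B_def)
  have "inv t \<otimes> b \<otimes> t = (inv t \<otimes> inv t) \<otimes> a \<otimes> inv (inv t \<otimes> inv t)"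
    using a t Ac by (simp add: inv_mult_group m_assoc)
  then show ?thesis using A_normal[OF square_in_E a(1)] t by simp
qed

lemma A_conj_B: "a \<in> A \<Longrightarrow> t \<otimes> a \<otimes> inv t \<in> B"
proof -
  assume a: "a \<in> A"
  have "t \<otimes> a \<otimes> inv t = inv t \<otimes> ((t \<otimes> t) \<otimes> a \<otimes> inv (t \<otimes> t)) \<otimes> t"
    using a t Ac by (simp add: inv_mult_group m_assoc)
  then show ?thesis using A_normal[OF square_in_E[OF t(1)] a] by (auto simp: B_def)
qed

text \<open>Correcting \<open>t\<close> by the \<open>A\<close>-part of \<open>t\<^sup>2\<close> yields an involution outside \<open>E\<close> swapping \<open>A\<close>
  and \<open>B\<close>: if \<open>t\<^sup>2 = a\<^sub>0 b\<^sub>0\<close>, conjugating by \<open>t\<close> and uniqueness of the decomposition give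
  \<open>b\<^sub>0 = a\<^sub>0\<^sup>t\<close>, whence \<open>s = t a\<^sub>0\<^sup>-\<^sup>1\<close> squares to one.\<close>

lemma exists_involution: "\<exists>s \<in> carrier G. s \<otimes> s = \<one> \<and> s \<notin> E \<and> (\<forall>a \<in> A. s \<otimes> a \<otimes> s \<in> B)"
proof -
  obtain a0 b0 where ab: "a0 \<in> A" "b0 \<in> B" "t \<otimes> t = a0 \<otimes> b0"
    using square_in_E[OF t(1)] E_product by (auto simp: set_mult_def)
  have a0c: "a0 \<in> carrier G" and b0c: "b0 \<in> carrier G" using ab Ac B_sub_E Ec by auto
  have a': "inv t \<otimes> b0 \<otimes> t \<in> A" and b': "inv t \<otimes> a0 \<otimes> t \<in> B"
    using B_conj_A[OF ab(2)] ab(1) by (auto simp: B_def)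
  have "t \<otimes> t = inv t \<otimes> (t \<otimes> t) \<otimes> t" using t by (simp add: m_assoc)
  then have "a0 \<otimes> b0 = inv t \<otimes> (a0 \<otimes> b0) \<otimes> t" by (simp only: ab(3))
  also have "\<dots> = (inv t \<otimes> a0 \<otimes> t) \<otimes> (inv t \<otimes> b0 \<otimes> t)" using t a0c b0c by (simp add: m_assoc)
  also have "\<dots> = (inv t \<otimes> b0 \<otimes> t) \<otimes> (inv t \<otimes> a0 \<otimes> t)" using A_B_commute[OF a' b'] .
  finally have b0: "b0 = inv t \<otimes> a0 \<otimes> t" using unique_decomposition[OF ab(1,2) a' b'] by blast
  define s where "s = t \<otimes> inv a0"
  have sc: "s \<in> carrier G" using t a0c by (simp add: s_def)
  have "s \<notin> E"
  proof
    assume "s \<in> E"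
    then have "s \<otimes> a0 \<in> E" using subgroup.m_closed[OF E] A(2) ab(1) by blast
    then show False using t a0c by (simp add: s_def m_assoc)
  qed
  moreover have ss: "s \<otimes> s = \<one>"
  proof -
    have "s \<otimes> s = (t \<otimes> t) \<otimes> inv (inv t \<otimes> a0 \<otimes> t) \<otimes> inv a0"
      using t a0c by (simp add: s_def inv_mult_group m_assoc)
    then show ?thesis using ab(3) b0 a0c b0c by (simp add: m_assoc)
  qed
  moreover have "s \<otimes> a \<otimes> s \<in> B" if a: "a \<in> A" for a
  proof -
    have "inv s = s" using inv_equality[OF ss sc sc] .
    then have "s \<otimes> a \<otimes> s = s \<otimes> a \<otimes> inv s" by simp
    also have "\<dots> = t \<otimes> (inv a0 \<otimes> a \<otimes> inv (inv a0)) \<otimes> inv t"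
      using t a0c Ac[OF a] by (simp add: s_def inv_mult_group m_assoc)
    finally show ?thesis
      using A_conj_B[OF A_normal[OF subsetD[OF A(2) subgroup.m_inv_closed[OF A(1) ab(1)]] a]] by simp
  qed
  ultimately show ?thesis using sc by blast
qed

theorem iso_wreath_C2:
  assumes H: "group H" "H \<cong> G\<lparr>carrier := A\<rparr>"
  shows "G \<cong> wreath_C2 H"
proof -
  obtain s where s: "s \<in> carrier G" "s \<otimes> s = \<one>" "s \<notin> E" "\<And>a. a \<in> A \<Longrightarrow> s \<otimes> a \<otimes> s \<in> B"
    using exists_involution by blast
  have "card (carrier G) = 2 * (card A * card A)"
    using lagrange[OF E] index_E card_E by (simp add: order_def)
  then show ?thesis
    using wreath_C2_recognition[OF fin E A B_subgroup B_sub_E A_disjoint[folded B_def] A_B_commute s]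
      H by blast
qed

end

lemma (in group_hom) subgroup_iso_image:
  assumes inj: "inj_on h (carrier G)" and S: "subgroup S G"
  shows "G\<lparr>carrier := S\<rparr> \<cong> H\<lparr>carrier := h ` S\<rparr>"
proof -
  interpret r: group_hom "G\<lparr>carrier := S\<rparr>" "H\<lparr>carrier := h ` S\<rparr>" h
    using induced_group_hom[OF S] .
  have "inj_on h S" using inj_on_subset[OF inj subgroup.subset[OF S]] .
  then have "h \<in> iso (G\<lparr>carrier := S\<rparr>) (H\<lparr>carrier := h ` S\<rparr>)"
    using r.homh by (simp add: iso_def bij_betw_def)
  then show ?thesis unfolding is_iso_def by blast
qed

lemma (in group_hom) normal_preimage:
  assumes N: "N \<lhd> H"
  shows "{g \<in> carrier G. h g \<in> N} \<lhd> G"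
proof -
  interpret N: normal N H by (rule N)
  show ?thesis
  proof (rule G.normal_invI)
    show "subgroup {g \<in> carrier G. h g \<in> N} G"
      by (rule G.subgroupI) (auto intro: N.m_closed N.m_inv_closed)
  next
    fix x n assume "x \<in> carrier G" "n \<in> {g \<in> carrier G. h g \<in> N}"
    then show "x \<otimes>\<^bsub>G\<^esub> n \<otimes>\<^bsub>G\<^esub> inv\<^bsub>G\<^esub> x \<in> {g \<in> carrier G. h g \<in> N}"
      using N.inv_op_closed2 by simp
  qed
qed

section \<open>The amalgam\<close>

text \<open>The hypotheses of the theorem: \<open>G\<^sub>x\<close> and \<open>G\<^sub>e\<close> are finite, \<open>G\<^sub>x\<^sub>y\<close> embeds in both with
  indices 5 and 2, \<open>t\<close> is an edge-reversing element, \<open>G\<^sub>x\<^sub>y\<^sup>[\<^sup>1\<^sup>] = 1\<close>,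
  \<open>G\<^sub>x/G\<^sub>x\<^sup>[\<^sup>1\<^sup>] \<cong> S\<^sub>5\<close> and \<open>G\<^sub>x\<^sup>[\<^sup>1\<^sup>] \<cong> S\<^sub>4\<close>.\<close>

locale S5_S4_amalgam =
  Gx: group Gx + Ge: group Ge + Gxy: group Gxy +
  IX: group_hom Gxy Gx ix + IE: group_hom Gxy Ge ie
  for Gx :: "'a monoid" and Ge :: "'b monoid" and Gxy :: "'c monoid"
    and ix :: "'c \<Rightarrow> 'a" and ie :: "'c \<Rightarrow> 'b" and t :: 'b +
  assumes fin: "finite (carrier Gx)" "finite (carrier Ge)"
    and inj: "inj_on ix (carrier Gxy)" "inj_on ie (carrier Gxy)"
    and deg_x: "card (rcosets\<^bsub>Gx\<^esub> (ix ` carrier Gxy)) = 5"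
    and deg_e: "card (rcosets\<^bsub>Ge\<^esub> (ie ` carrier Gxy)) = 2"
    and t: "t \<in> carrier Ge" "t \<notin> ie ` carrier Gxy"
    and Gxy1: "{b \<in> carrier Gxy. ix b \<in> coset_action_kernel Gx (ix ` carrier Gxy)}
               \<inter> {b \<in> carrier Gxy. \<exists>k \<in> carrier Gxy.
                    ix k \<in> coset_action_kernel Gx (ix ` carrier Gxy) \<and>
                    ie b = inv\<^bsub>Ge\<^esub> t \<otimes>\<^bsub>Ge\<^esub> ie k \<otimes>\<^bsub>Ge\<^esub> t}
             = {\<one>\<^bsub>Gxy\<^esub>}"
    and quot: "Gx Mod (coset_action_kernel Gx (ix ` carrier Gxy)) \<cong> sym_group 5"
    and kern: "Gx\<lparr>carrier := coset_action_kernel Gx (ix ` carrier Gxy)\<rparr> \<cong> sym_group 4"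
begin

definition K :: "'a set" where "K = coset_action_kernel Gx (ix ` carrier Gxy)"
definition L :: "'c set" where "L = {b \<in> carrier Gxy. ix b \<in> K}"
definition A :: "'b set" where "A = ie ` L"

lemma K_normal: "K \<lhd> Gx"
  unfolding K_def by (rule Gx.coset_action_kernel_normal[OF IX.img_is_subgroup])

lemma K_sub: "K \<subseteq> ix ` carrier Gxy"
  unfolding K_def by (rule Gx.coset_action_kernel_subset[OF IX.img_is_subgroup])

lemma card_K: "card K = 24"
  using iso_same_card[OF kern] by (simp add: K_def sym_group_card_carrier fact_numeral)

lemma card_image_Gxy: "card (ix ` carrier Gxy) = 576"
proof -
  have "card (rcosets\<^bsub>Gx\<^esub> K) = 120"
    using iso_same_card[OF quot] by (simp add: K_def FactGroup_def sym_group_card_carrier fact_numeral)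
  then have "card (carrier Gx) = 2880"
    using Gx.lagrange[OF normal_imp_subgroup[OF K_normal]] card_K by (simp add: order_def)
  then show ?thesis using Gx.lagrange[OF IX.img_is_subgroup] deg_x by (simp add: order_def)
qed

lemma ix_L: "ix ` L = K"
  using K_sub by (auto simp: L_def)

lemma L_normal: "L \<lhd> Gxy"
  unfolding L_def by (rule IX.normal_preimage[OF K_normal])

lemma card_A: "card A = 24"
proof -
  have Ls: "L \<subseteq> carrier Gxy" by (auto simp: L_def)
  then have "card L = 24" using card_image[OF inj_on_subset[OF inj(1) Ls]] ix_L card_K by simp
  then show ?thesis using card_image[OF inj_on_subset[OF inj(2) Ls]] by (simp add: A_def)
qed

lemma card_edge_image: "card (ie ` carrier Gxy) = 576"
  using card_image[OF inj(1)] card_image[OF inj(2)] card_image_Gxy by simp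

text \<open>In \<open>G\<^sub>e\<close>, \<open>A\<close> is normalised by the image of \<open>G\<^sub>x\<^sub>y\<close> (as \<open>L \<unlhd> G\<^sub>x\<^sub>y\<close>) and meets its
  \<open>t\<close>-conjugate trivially (this is \<open>G\<^sub>x\<^sub>y\<^sup>[\<^sup>1\<^sup>] = 1\<close>).\<close>

lemma A_normal:
  assumes "e \<in> ie ` carrier Gxy" "a \<in> A"
  shows "e \<otimes>\<^bsub>Ge\<^esub> a \<otimes>\<^bsub>Ge\<^esub> inv\<^bsub>Ge\<^esub> e \<in> A"
proof -
  obtain g l where gl: "g \<in> carrier Gxy" "e = ie g" "l \<in> L" "a = ie l"
    using assms by (auto simp: A_def)
  then have "g \<otimes>\<^bsub>Gxy\<^esub> l \<otimes>\<^bsub>Gxy\<^esub> inv\<^bsub>Gxy\<^esub> g \<in> L"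
    using normal.inv_op_closed2[OF L_normal] by blast
  moreover have "l \<in> carrier Gxy" using gl(3) by (simp add: L_def)
  ultimately show ?thesis using gl by (force simp: A_def)
qed

lemma A_disjoint: "A \<inter> (\<lambda>a. inv\<^bsub>Ge\<^esub> t \<otimes>\<^bsub>Ge\<^esub> a \<otimes>\<^bsub>Ge\<^esub> t) ` A = {\<one>\<^bsub>Ge\<^esub>}"
proof
  show "A \<inter> (\<lambda>a. inv\<^bsub>Ge\<^esub> t \<otimes>\<^bsub>Ge\<^esub> a \<otimes>\<^bsub>Ge\<^esub> t) ` A \<subseteq> {\<one>\<^bsub>Ge\<^esub>}"
  proof
    fix x assume "x \<in> A \<inter> (\<lambda>a. inv\<^bsub>Ge\<^esub> t \<otimes>\<^bsub>Ge\<^esub> a \<otimes>\<^bsub>Ge\<^esub> t) ` A"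
    then obtain b k where b: "b \<in> L" "x = ie b" and k: "k \<in> L" "ie b = inv\<^bsub>Ge\<^esub> t \<otimes>\<^bsub>Ge\<^esub> ie k \<otimes>\<^bsub>Ge\<^esub> t"
      by (auto simp: A_def)
    then have "b = \<one>\<^bsub>Gxy\<^esub>" using Gxy1 by (auto simp: L_def K_def)
    then show "x \<in> {\<one>\<^bsub>Ge\<^esub>}" using b by simp
  qed
  have "\<one>\<^bsub>Gxy\<^esub> \<in> L" using normal_imp_subgroup[OF K_normal] by (simp add: L_def subgroup.one_closed)
  then show "{\<one>\<^bsub>Ge\<^esub>} \<subseteq> A \<inter> (\<lambda>a. inv\<^bsub>Ge\<^esub> t \<otimes>\<^bsub>Ge\<^esub> a \<otimes>\<^bsub>Ge\<^esub> t) ` A"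
    using t(1) by (force simp: A_def)
qed

lemma edge_setting: "index_two_square Ge (ie ` carrier Gxy) A t"
proof (intro index_two_square.intro index_two_square_axioms.intro)
  show "A \<subseteq> ie ` carrier Gxy" by (auto simp: A_def L_def)
  show "subgroup A Ge"
    unfolding A_def by (rule IE.subgroup_img_is_subgroup[OF normal_imp_subgroup[OF L_normal]])
qed (use Ge.is_group fin IE.img_is_subgroup deg_e t A_normal A_disjoint card_edge_image card_A in auto)

lemma A_iso_S4: "sym_group 4 \<cong> Ge\<lparr>carrier := A\<rparr>"
proof -
  have K_grp: "group (Gx\<lparr>carrier := K\<rparr>)"
    using Gx.subgroup_imp_group[OF normal_imp_subgroup[OF K_normal]] .
  have L_sg: "subgroup L Gxy" using normal_imp_subgroup[OF L_normal] .
  have "sym_group 4 \<cong> Gx\<lparr>carrier := K\<rparr>"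
    using group.iso_sym[OF K_grp] kern by (simp add: K_def)
  also have "Gx\<lparr>carrier := K\<rparr> \<cong> Gxy\<lparr>carrier := L\<rparr>"
    using group.iso_sym[OF Gxy.subgroup_imp_group[OF L_sg] IX.subgroup_iso_image[OF inj(1) L_sg]] ix_L
    by simp
  also have "Gxy\<lparr>carrier := L\<rparr> \<cong> Ge\<lparr>carrier := A\<rparr>"
    using IE.subgroup_iso_image[OF inj(2) L_sg] by (simp add: A_def)
  finally show ?thesis .
qed

theorem Ge_iso_wreath: "Ge \<cong> wreath_C2 (sym_group 4)"
  using index_two_square.iso_wreath_C2[OF edge_setting sym_group_is_group A_iso_S4] .

text \<open>Pulling the decomposition \<open>ie(G\<^sub>x\<^sub>y) = A \<times> A\<^sup>t\<close> back to \<open>G\<^sub>x\<^sub>y\<close> and pushing it into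
  \<open>G\<^sub>x\<close> writes every element of \<open>ix(G\<^sub>x\<^sub>y)\<close> as an element of \<open>K\<close> times one centralising \<open>K\<close>.\<close>

lemma image_sub_K_centraliser: "ix ` carrier Gxy \<subseteq> K <#>\<^bsub>Gx\<^esub> centraliser Gx K"
proof
  interpret edge: index_two_square Ge "ie ` carrier Gxy" A t by (rule edge_setting)
  fix h assume "h \<in> ix ` carrier Gxy"
  then obtain g where g: "g \<in> carrier Gxy" "h = ix g" by blast
  obtain a b where ab: "a \<in> A" "b \<in> edge.B" "ie g = a \<otimes>\<^bsub>Ge\<^esub> b"
    using edge.E_product g(1) by (force simp: set_mult_def)
  obtain l1 where l1: "l1 \<in> L" "a = ie l1" using ab(1) by (auto simp: A_def)
  obtain l2 where l2: "l2 \<in> carrier Gxy" "b = ie l2" using ab(2) edge.B_sub_E by blast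
  have l1c: "l1 \<in> carrier Gxy" using l1(1) by (simp add: L_def)
  have "g = l1 \<otimes>\<^bsub>Gxy\<^esub> l2"
    using ab(3) l1 l2 l1c g(1) inj(2) by (simp add: inj_on_def)
  then have h: "h = ix l1 \<otimes>\<^bsub>Gx\<^esub> ix l2" using g l1c l2(1) by simp
  have "ix l2 \<otimes>\<^bsub>Gx\<^esub> k = k \<otimes>\<^bsub>Gx\<^esub> ix l2" if "k \<in> K" for k
  proof -
    have "k \<in> ix ` L" using that ix_L by simp
    then obtain l where l: "l \<in> L" "k = ix l" by blast
    have lc: "l \<in> carrier Gxy" using l(1) by (simp add: L_def)
    have "ie (l2 \<otimes>\<^bsub>Gxy\<^esub> l) = ie (l \<otimes>\<^bsub>Gxy\<^esub> l2)"
      using edge.A_B_commute[of "ie l" b] l(1) ab(2) l2 lc by (simp add: A_def)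
    then have "l2 \<otimes>\<^bsub>Gxy\<^esub> l = l \<otimes>\<^bsub>Gxy\<^esub> l2" using inj(2) l2(1) lc by (simp add: inj_on_def)
    then show ?thesis using l(2) l2(1) lc by (metis IX.hom_mult)
  qed
  then have "ix l2 \<in> centraliser Gx K" using l2(1) by (simp add: centraliser_def)
  moreover have "ix l1 \<in> K" using l1(1) by (simp add: L_def)
  ultimately show "h \<in> K <#>\<^bsub>Gx\<^esub> centraliser Gx K" using h by (auto simp: set_mult_def)
qed

text \<open>\<open>ix(G\<^sub>x\<^sub>y)\<close> is not normal in \<open>G\<^sub>x\<close>: otherwise it would fix all its cosets and lie
  in the kernel \<open>K\<close>, which is much smaller.\<close>

lemma image_not_normal: "\<not> ix ` carrier Gxy \<lhd> Gx"
proof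
  assume "ix ` carrier Gxy \<lhd> Gx"
  then have "ix ` carrier Gxy \<subseteq> K"
    unfolding K_def by (rule Gx.normal_subset_coset_action_kernel)
  moreover have "finite K"
    using finite_subset[OF subgroup.subset[OF normal_imp_subgroup[OF K_normal]] fin(1)] .
  ultimately have "card (ix ` carrier Gxy) \<le> card K" by (simp add: card_mono)
  then show False using card_K card_image_Gxy by simp
qed

theorem Gx_iso_product: "Gx \<cong> sym_group 5 \<times>\<times> sym_group 4"
proof -
  have K_grp: "group (Gx\<lparr>carrier := K\<rparr>)"
    using Gx.subgroup_imp_group[OF normal_imp_subgroup[OF K_normal]] .
  have "trivial_centre (Gx\<lparr>carrier := K\<rparr>)"
    using iso_trivial_centre[OF _ K_grp sym_group_is_group sym_group_trivial_centre] kern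
    by (simp add: K_def)
  then have "Gx \<cong> (Gx Mod K) \<times>\<times> Gx\<lparr>carrier := K\<rparr>"
    using Gx.centraliser_complement_iso[OF fin(1) K_normal _ IX.img_is_subgroup _ image_not_normal
        image_sub_K_centraliser] deg_x by simp
  also have "\<dots> \<cong> sym_group 5 \<times>\<times> sym_group 4"
    using group.DirProd_iso_trans[OF normal.factorgroup_is_group[OF K_normal]] quot kern
    by (simp add: K_def)
  finally show ?thesis .
qed

end

theorem mainTheorem13:
  fixes Gx :: "'a monoid" and Ge :: "'b monoid" and Gxy :: "'c monoid"
    and ix :: "'c \<Rightarrow> 'a" and ie :: "'c \<Rightarrow> 'b" and t :: 'b
  assumes grp: "group Gx" "group Ge" "group Gxy"
    and fin: "finite (carrier Gx)" "finite (carrier Ge)"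
    and ix: "ix \<in> hom Gxy Gx" "inj_on ix (carrier Gxy)"
    and ie: "ie \<in> hom Gxy Ge" "inj_on ie (carrier Gxy)"
    and deg_x: "card (rcosets\<^bsub>Gx\<^esub> (ix ` carrier Gxy)) = 5"
    and deg_e: "card (rcosets\<^bsub>Ge\<^esub> (ie ` carrier Gxy)) = 2"
    and primitive: "\<And>N. subgroup N Gxy \<Longrightarrow> ix ` N \<lhd> Gx \<Longrightarrow> ie ` N \<lhd> Ge \<Longrightarrow> N = {\<one>\<^bsub>Gxy\<^esub>}"
    and t: "t \<in> carrier Ge" "t \<notin> ie ` carrier Gxy"
    and Gxy1: "{b \<in> carrier Gxy. ix b \<in> coset_action_kernel Gx (ix ` carrier Gxy)}
               \<inter> {b \<in> carrier Gxy. \<exists>k \<in> carrier Gxy.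
                    ix k \<in> coset_action_kernel Gx (ix ` carrier Gxy) \<and>
                    ie b = inv\<^bsub>Ge\<^esub> t \<otimes>\<^bsub>Ge\<^esub> ie k \<otimes>\<^bsub>Ge\<^esub> t}
             = {\<one>\<^bsub>Gxy\<^esub>}"
    and quot: "Gx Mod (coset_action_kernel Gx (ix ` carrier Gxy)) \<cong> sym_group 5"
    and kern: "Gx\<lparr>carrier := coset_action_kernel Gx (ix ` carrier Gxy)\<rparr> \<cong> sym_group 4"
  shows "Gx \<cong> DirProd (sym_group 5) (sym_group 4) \<and> Ge \<cong> wreath_C2 (sym_group 4)"
proof -
  interpret S5_S4_amalgam Gx Ge Gxy ix ie t
    using grp fin ix ie deg_x deg_e t Gxy1 quot kern
    by (simp add: S5_S4_amalgam_def S5_S4_amalgam_axioms_def group_hom_def group_hom_axioms_def)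
  show ?thesis using Gx_iso_product Ge_iso_wreath by simp
qed

end
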